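(* Let $m,n$ be positive integers, $a=\min(m,n)$ and $b=\max(m,n)$. Then $J(\mathbf{P}_{m,n})$, ordered by inclusion, is a distributive lattice of rank $\frac{-a^3+3a^2b+3ab+a}{6}$.
   Context: The poset $\mathbf{P}_{m,n}$ has elements the integer triples $(i,j,k)$ with $0\le k\le m-1$, $k\le j\le n-1$, $k\le i\le m-1$, and partial order generated by the covering relations: $(i,j,k)$ covers each of $(i+1,j,k)$, $(i,j+1,k)$, $(i-1,j,k-1)$, $(i,j-1,k-1)$ that is an element of $\mathbf{P}_{m,n}$. For a poset $P$, $J(P)$ denotes the set of order ideals of $P$ (subsets $X$ with $y\in X,\ z\le y\Rightarrow z\in X$). *)

theory Defs
  imports Main
begin

type_synonym triple = "nat \<times> nat \<times> nat"

definition Pmn :: "nat \<Rightarrow> nat \<Rightarrow> triple set" where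
  "Pmn m n = {(i,j,k). k \<le> m - 1 \<and> k \<le> j \<and> j \<le> n - 1 \<and> k \<le> i \<and> i \<le> m - 1}"

text \<open>covers m n x y: x covers y (so y < x), both elements of P_{m,n}.\<close>
definition covers :: "nat \<Rightarrow> nat \<Rightarrow> triple \<Rightarrow> triple \<Rightarrow> bool" where
  "covers m n x y \<longleftrightarrow> x \<in> Pmn m n \<and> y \<in> Pmn m n \<and>
     (case x of (i,j,k) \<Rightarrow>
        y = (i+1, j, k) \<or> y = (i, j+1, k) \<or>
        (1 \<le> i \<and> 1 \<le> k \<and> y = (i-1, j, k-1)) \<or>
        (1 \<le> j \<and> 1 \<le> k \<and> y = (i, j-1, k-1)))"

definition Ple :: "nat \<Rightarrow> nat \<Rightarrow> triple \<Rightarrow> triple \<Rightarrow> bool" where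
  "Ple m n y x \<longleftrightarrow> y \<in> Pmn m n \<and> x \<in> Pmn m n \<and> (\<lambda>a b. covers m n b a)\<^sup>*\<^sup>* y x"

definition order_ideals :: "nat \<Rightarrow> nat \<Rightarrow> triple set set" where
  "order_ideals m n = {X. X \<subseteq> Pmn m n \<and> (\<forall>y\<in>X. \<forall>z. Ple m n z y \<longrightarrow> z \<in> X)}"

definition is_lub_in :: "'a set set \<Rightarrow> 'a set \<Rightarrow> 'a set \<Rightarrow> 'a set \<Rightarrow> bool" where
  "is_lub_in S X Y Z \<longleftrightarrow> Z \<in> S \<and> X \<subseteq> Z \<and> Y \<subseteq> Z \<and> (\<forall>W\<in>S. X \<subseteq> W \<and> Y \<subseteq> W \<longrightarrow> Z \<subseteq> W)"

definition is_glb_in :: "'a set set \<Rightarrow> 'a set \<Rightarrow> 'a set \<Rightarrow> 'a set \<Rightarrow> bool" where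
  "is_glb_in S X Y Z \<longleftrightarrow> Z \<in> S \<and> Z \<subseteq> X \<and> Z \<subseteq> Y \<and> (\<forall>W\<in>S. W \<subseteq> X \<and> W \<subseteq> Y \<longrightarrow> W \<subseteq> Z)"

definition join_in :: "'a set set \<Rightarrow> 'a set \<Rightarrow> 'a set \<Rightarrow> 'a set" where
  "join_in S X Y = (THE Z. is_lub_in S X Y Z)"

definition meet_in :: "'a set set \<Rightarrow> 'a set \<Rightarrow> 'a set \<Rightarrow> 'a set" where
  "meet_in S X Y = (THE Z. is_glb_in S X Y Z)"

definition is_lattice_incl :: "'a set set \<Rightarrow> bool" where
  "is_lattice_incl S \<longleftrightarrow> S \<noteq> {} \<and>
     (\<forall>X\<in>S. \<forall>Y\<in>S. (\<exists>Z. is_lub_in S X Y Z) \<and> (\<exists>Z. is_glb_in S X Y Z))"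

definition is_distrib_lattice_incl :: "'a set set \<Rightarrow> bool" where
  "is_distrib_lattice_incl S \<longleftrightarrow> is_lattice_incl S \<and>
     (\<forall>X\<in>S. \<forall>Y\<in>S. \<forall>Z\<in>S.
        meet_in S X (join_in S Y Z) = join_in S (meet_in S X Y) (meet_in S X Z))"

definition is_chain_incl :: "'a set set \<Rightarrow> 'a set set \<Rightarrow> bool" where
  "is_chain_incl S C \<longleftrightarrow> C \<subseteq> S \<and> (\<forall>X\<in>C. \<forall>Y\<in>C. X \<subseteq> Y \<or> Y \<subseteq> X)"

definition is_maximal_chain_incl :: "'a set set \<Rightarrow> 'a set set \<Rightarrow> bool" where
  "is_maximal_chain_incl S C \<longleftrightarrow> is_chain_incl S C \<and>
     (\<forall>D. is_chain_incl S D \<and> C \<subseteq> D \<longrightarrow> D = C)"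

definition graded_of_rank :: "'a set set \<Rightarrow> nat \<Rightarrow> bool" where
  "graded_of_rank S r \<longleftrightarrow> finite S \<and>
     (\<forall>C. is_maximal_chain_incl S C \<longrightarrow> finite C \<and> card C = r + 1)"

end

theory Submission
  imports Defs
begin

text \<open>Order ideals of a finite poset are closed under union and intersection, so they form a
  distributive lattice of sets. Given two ideals \<open>X \<subset> Y\<close>, adding to \<open>X\<close> an element of \<open>Y - X\<close>
  minimising \<open>3k - i - j\<close>, a quantity that strictly decreases along every covering relation,
  gives again an ideal; hence every maximal chain of ideals grows by exactly one
  element at each step, and the rank is \<open>|P\<^sub>m\<^sub>,\<^sub>n|\<close>. Counting the triples layer by layer in \<open>k\<close>
  gives \<open>|P\<^sub>m\<^sub>,\<^sub>n| = (\<Sum>k<a. (a - k) (b - k))\<close>, which evaluates to the stated cubic.\<close>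

lemma join_in_eq_Un:
  assumes "X \<union> Y \<in> S"
  shows "join_in S X Y = X \<union> Y"
  unfolding join_in_def
proof (rule the_equality)
  show "is_lub_in S X Y (X \<union> Y)"
    using assms unfolding is_lub_in_def by blast
  show "Z = X \<union> Y" if "is_lub_in S X Y Z" for Z
    using that assms unfolding is_lub_in_def by blast
qed

lemma meet_in_eq_Int:
  assumes "X \<inter> Y \<in> S"
  shows "meet_in S X Y = X \<inter> Y"
  unfolding meet_in_def
proof (rule the_equality)
  show "is_glb_in S X Y (X \<inter> Y)"
    using assms unfolding is_glb_in_def by blast
  show "Z = X \<inter> Y" if "is_glb_in S X Y Z" for Z
    using that assms unfolding is_glb_in_def by blast
qed

lemma is_distrib_lattice_incl_if_Un_Int_closed:
  assumes "S \<noteq> {}"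
    and Un_closed: "\<And>X Y. X \<in> S \<Longrightarrow> Y \<in> S \<Longrightarrow> X \<union> Y \<in> S"
    and Int_closed: "\<And>X Y. X \<in> S \<Longrightarrow> Y \<in> S \<Longrightarrow> X \<inter> Y \<in> S"
  shows "is_distrib_lattice_incl S"
proof -
  have "is_lattice_incl S"
    unfolding is_lattice_incl_def is_lub_in_def is_glb_in_def
    using assms by blast
  moreover have "meet_in S X (join_in S Y Z) = join_in S (meet_in S X Y) (meet_in S X Z)"
    if "X \<in> S" "Y \<in> S" "Z \<in> S" for X Y Z
    using that by (simp add: join_in_eq_Un meet_in_eq_Int Un_closed Int_closed Int_Un_distrib)
  ultimately show ?thesis
    unfolding is_distrib_lattice_incl_def by blast
qed

lemma maximal_chain_memI:
  assumes "is_maximal_chain_incl S C" "Z \<in> S"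
    and "\<And>W. W \<in> C \<Longrightarrow> W \<subseteq> Z \<or> Z \<subseteq> W"
  shows "Z \<in> C"
proof -
  have "is_chain_incl S (insert Z C)"
    using assms unfolding is_maximal_chain_incl_def is_chain_incl_def by blast
  then have "insert Z C = C"
    using assms(1) unfolding is_maximal_chain_incl_def by blast
  then show ?thesis by blast
qed

lemma maximal_chain_successor:
  assumes C: "is_maximal_chain_incl S C" "finite C"
    and step: "\<And>X Y. X \<in> S \<Longrightarrow> Y \<in> S \<Longrightarrow> X \<subset> Y \<Longrightarrow> \<exists>z\<in>Y - X. insert z X \<in> S"
    and X: "X \<in> C" and "Y \<in> C" "X \<subset> Y"
  shows "\<exists>z. z \<notin> X \<and> insert z X \<in> C"
proof -
  have chain: "C \<subseteq> S" "\<And>V W. V \<in> C \<Longrightarrow> W \<in> C \<Longrightarrow> V \<subseteq> W \<or> W \<subseteq> V"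
    using C(1) unfolding is_maximal_chain_incl_def is_chain_incl_def by blast+
  let ?above = "{W \<in> C. X \<subset> W}"
  have "\<exists>Y'\<in>?above. \<forall>W\<in>?above. W \<subseteq> Y' \<longrightarrow> Y' = W"
    by (rule finite_has_minimal) (use C(2) assms(5,6) in auto)
  then obtain Y' where "Y' \<in> ?above" and minimal: "\<forall>W\<in>?above. W \<subseteq> Y' \<longrightarrow> Y' = W"
    by (elim bexE)
  then have Y': "Y' \<in> C" "X \<subset> Y'"
    by simp_all
  have least: "Y' \<subseteq> W" if W: "W \<in> C" "X \<subset> W" for W
  proof (cases "W \<subseteq> Y'")
    case True
    have "W \<in> ?above"
      using W by simp
    then show ?thesis
      using minimal True by simp
  next
    case False
    then show ?thesis
      using chain(2)[OF W(1) Y'(1)] by blast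
  qed
  obtain z where z: "z \<in> Y' - X" "insert z X \<in> S"
    using step[of X Y'] chain(1) X Y' by blast
  have "insert z X \<in> C"
  proof (rule maximal_chain_memI[OF C(1) z(2)])
    fix W assume W: "W \<in> C"
    show "W \<subseteq> insert z X \<or> insert z X \<subseteq> W"
    proof (cases "W \<subseteq> X")
      case False
      then have "X \<subset> W"
        using chain(2)[OF W X] by blast
      then show ?thesis
        using least[OF W] z(1) by blast
    qed blast
  qed
  then show ?thesis
    using z(1) by blast
qed

lemma inj_on_card_chain:
  assumes "\<And>V W. V \<in> C \<Longrightarrow> W \<in> C \<Longrightarrow> V \<subseteq> W \<or> W \<subseteq> V"
    and "\<And>W. W \<in> C \<Longrightarrow> finite W"
  shows "inj_on card C"
proof (rule inj_onI)
  fix V W assume V: "V \<in> C" and W: "W \<in> C" and card_eq: "card V = card W"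
  from assms(1)[OF V W] show "V = W"
  proof
    assume "V \<subseteq> W"
    then show ?thesis
      using card_subset_eq[OF assms(2)[OF W] _ card_eq] by blast
  next
    assume "W \<subseteq> V"
    then show ?thesis
      using card_subset_eq[OF assms(2)[OF V] _ card_eq[symmetric]] by blast
  qed
qed

lemma graded_of_rank_if_one_point_refinable:
  assumes "finite P" "S \<subseteq> Pow P" "{} \<in> S" "P \<in> S"
    and step: "\<And>X Y. X \<in> S \<Longrightarrow> Y \<in> S \<Longrightarrow> X \<subset> Y \<Longrightarrow> \<exists>z\<in>Y - X. insert z X \<in> S"
  shows "graded_of_rank S (card P)"
  unfolding graded_of_rank_def
proof (intro conjI allI impI)
  have "finite (Pow P)"
    using assms(1) by simp
  then show finite_S: "finite S"
    using assms(2) finite_subset by blast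
  fix C assume C: "is_maximal_chain_incl S C"
  have chain: "C \<subseteq> S" "\<And>V W. V \<in> C \<Longrightarrow> W \<in> C \<Longrightarrow> V \<subseteq> W \<or> W \<subseteq> V"
    using C unfolding is_maximal_chain_incl_def is_chain_incl_def by blast+
  have sub_P: "W \<subseteq> P" if "W \<in> C" for W
    using that chain(1) assms(2) by blast
  have finite_mem: "finite W" if "W \<in> C" for W
    using sub_P[OF that] assms(1) finite_subset by blast
  show finite_C: "finite C"
    using finite_S chain(1) finite_subset by blast
  have "{} \<in> C"
    by (rule maximal_chain_memI[OF C assms(3)]) blast
  have "P \<in> C"
    by (rule maximal_chain_memI[OF C assms(4)]) (use sub_P in blast)
  have "\<exists>X\<in>C. card X = k" if "k \<le> card P" for k
    using that
  proof (induction k)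
    case 0
    then show ?case using \<open>{} \<in> C\<close> by force
  next
    case (Suc k)
    then obtain X where X: "X \<in> C" "card X = k" by auto
    then have "X \<subset> P"
      using sub_P[OF X(1)] Suc.prems by auto
    then obtain z where "z \<notin> X" "insert z X \<in> C"
      using maximal_chain_successor[OF C finite_C step X(1) \<open>P \<in> C\<close>] by blast
    then show ?case
      using X finite_mem[OF X(1)] by (intro bexI[of _ "insert z X"]) auto
  qed
  moreover have "card W \<le> card P" if "W \<in> C" for W
    using sub_P[OF that] assms(1) card_mono by blast
  ultimately have "card ` C = {..card P}"
    by (auto simp: image_iff)
  moreover have "inj_on card C"
    using inj_on_card_chain chain(2) finite_mem by blast
  ultimately show "card C = card P + 1"
    using card_image[of card C] by simp
qed

definition down_sets :: "'a set \<Rightarrow> ('a \<Rightarrow> 'a \<Rightarrow> bool) \<Rightarrow> 'a set set" where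
  "down_sets P R = {X. X \<subseteq> P \<and> (\<forall>y\<in>X. \<forall>z. R z y \<longrightarrow> z \<in> X)}"

lemma empty_mem_down_sets: "{} \<in> down_sets P R"
  unfolding down_sets_def by blast

lemma Un_mem_down_sets:
  "X \<in> down_sets P R \<Longrightarrow> Y \<in> down_sets P R \<Longrightarrow> X \<union> Y \<in> down_sets P R"
  unfolding down_sets_def by blast

lemma Int_mem_down_sets:
  "X \<in> down_sets P R \<Longrightarrow> Y \<in> down_sets P R \<Longrightarrow> X \<inter> Y \<in> down_sets P R"
  unfolding down_sets_def by blast

lemma top_mem_down_sets:
  assumes "\<And>y z. R z y \<Longrightarrow> z \<in> P"
  shows "P \<in> down_sets P R"
  using assms unfolding down_sets_def by blast

lemma is_distrib_lattice_incl_down_sets: "is_distrib_lattice_incl (down_sets P R)"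
  using empty_mem_down_sets Un_mem_down_sets Int_mem_down_sets
  by (intro is_distrib_lattice_incl_if_Un_Int_closed) blast+

lemma down_sets_insert_minimal:
  fixes f :: "'a \<Rightarrow> 'b::order"
  assumes "finite P"
    and potential: "\<And>y z. R z y \<Longrightarrow> z = y \<or> f z < f y"
    and X: "X \<in> down_sets P R" and Y: "Y \<in> down_sets P R" and "X \<subset> Y"
  shows "\<exists>z\<in>Y - X. insert z X \<in> down_sets P R"
proof -
  define z where "z = arg_min_on f (Y - X)"
  have "finite (Y - X)"
    using Y \<open>finite P\<close> finite_subset unfolding down_sets_def by blast
  then have z: "z \<in> Y - X" and minimal: "\<And>w. w \<in> Y - X \<Longrightarrow> \<not> f w < f z"
    using arg_min_if_finite[of "Y - X" f] \<open>X \<subset> Y\<close> unfolding z_def by auto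
  have closed: "w \<in> insert z X" if "y \<in> insert z X" "R w y" for y w
  proof (cases "y = z")
    case True
    then have "w \<in> Y"
      using Y z that(2) unfolding down_sets_def by blast
    then show ?thesis
      using minimal[of w] potential[OF that(2)] True by blast
  next
    case False
    then show ?thesis
      using X that unfolding down_sets_def by blast
  qed
  have "insert z X \<subseteq> P"
    using X Y z unfolding down_sets_def by blast
  then have "insert z X \<in> down_sets P R"
    using closed unfolding down_sets_def by blast
  with z show ?thesis by blast
qed

lemma graded_of_rank_down_sets:
  fixes f :: "'a \<Rightarrow> 'b::order"
  assumes "finite P"
    and closed: "\<And>y z. R z y \<Longrightarrow> z \<in> P"
    and potential: "\<And>y z. R z y \<Longrightarrow> z = y \<or> f z < f y"
  shows "graded_of_rank (down_sets P R) (card P)"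
proof (rule graded_of_rank_if_one_point_refinable[OF \<open>finite P\<close>])
  show "down_sets P R \<subseteq> Pow P"
    unfolding down_sets_def by blast
  show "{} \<in> down_sets P R"
    by (rule empty_mem_down_sets)
  show "P \<in> down_sets P R"
    using closed by (rule top_mem_down_sets)
  show "\<exists>z\<in>Y - X. insert z X \<in> down_sets P R"
    if "X \<in> down_sets P R" "Y \<in> down_sets P R" "X \<subset> Y" for X Y
    using down_sets_insert_minimal[OF \<open>finite P\<close> potential that] .
qed

lemma rtranclp_potential:
  fixes f :: "'a \<Rightarrow> 'b::order"
  assumes "r\<^sup>*\<^sup>* x y" and "\<And>u v. r u v \<Longrightarrow> f u < f v"
  shows "x = y \<or> f x < f y"
  using assms(1)
proof (induction rule: rtranclp_induct)
  case base
  then show ?case by simp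
next
  case (step v w)
  have "f v < f w"
    using assms(2) step.hyps(2) .
  with step.IH show ?case
    using order.strict_trans by blast
qed

definition potential :: "triple \<Rightarrow> int" where
  "potential t = (case t of (i, j, k) \<Rightarrow> 3 * int k - int i - int j)"

lemma covers_potential: "covers m n x y \<Longrightarrow> potential y < potential x"
  unfolding covers_def potential_def by (cases x) auto

lemma Ple_potential: "Ple m n y x \<Longrightarrow> y = x \<or> potential y < potential x"
  unfolding Ple_def using rtranclp_potential[where f = potential] covers_potential by blast

lemma order_ideals_eq_down_sets: "order_ideals m n = down_sets (Pmn m n) (Ple m n)"
  unfolding order_ideals_def down_sets_def ..

lemma finite_Pmn: "finite (Pmn m n)"
proof (rule finite_subset)
  show "Pmn m n \<subseteq> {0..m} \<times> {0..n} \<times> {0..m}"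
    unfolding Pmn_def by auto
qed simp

lemma card_Pmn:
  assumes "0 < m" "0 < n"
  shows "card (Pmn m n) = (\<Sum>k<min m n. (m - k) * (n - k))"
proof -
  let ?layers = "SIGMA k:{..<min m n}. {k..<m} \<times> {k..<n}"
  let ?h = "\<lambda>(k, i, j). (i, j, k)"
  have "Pmn m n = ?h ` ?layers"
    using assms unfolding Pmn_def by (force simp: image_iff)
  moreover have "inj_on ?h ?layers"
    by (auto simp: inj_on_def)
  ultimately have "card (Pmn m n) = card ?layers"
    by (simp add: card_image)
  also have "\<dots> = (\<Sum>k<min m n. (m - k) * (n - k))"
    by (simp add: card_SigmaI card_cartesian_product)
  finally show ?thesis .
qed

lemma sum_shifted_products_closed_form:
  "6 * int (\<Sum>i<a. (i + 1) * (d + i + 1)) =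
     - ((int a)^3) + 3 * (int a)^2 * int (a + d) + 3 * int a * int (a + d) + int a"
proof (induction a)
  case 0
  then show ?case by simp
next
  case (Suc a)
  then show ?case
    by (simp add: algebra_simps power3_eq_cube power2_eq_square)
qed

lemma sum_layer_sizes_closed_form:
  assumes "a \<le> b"
  shows "6 * int (\<Sum>k<a. (a - k) * (b - k)) =
           - ((int a)^3) + 3 * (int a)^2 * int b + 3 * int a * int b + int a"
proof -
  obtain d where b: "b = a + d"
    using assms le_Suc_ex by blast
  have "(\<Sum>k<a. (a - k) * (a + d - k)) = (\<Sum>i<a. (a - (a - Suc i)) * (a + d - (a - Suc i)))"
    by (rule sum.nat_diff_reindex[symmetric])
  also have "\<dots> = (\<Sum>i<a. (i + 1) * (d + i + 1))"
    by (rule sum.cong) auto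
  finally show ?thesis
    unfolding b using sum_shifted_products_closed_form by presburger
qed

theorem corollary3p18:
  fixes m n :: nat
  assumes "0 < m" and "0 < n"
  defines "a \<equiv> min m n" and "b \<equiv> max m n"
  shows "is_distrib_lattice_incl (order_ideals m n) \<and>
         (\<exists>r::nat. 6 * int r = - ((int a)^3) + 3 * (int a)^2 * int b + 3 * int a * int b + int a
                  \<and> graded_of_rank (order_ideals m n) r)"
proof -
  have distrib: "is_distrib_lattice_incl (order_ideals m n)"
    unfolding order_ideals_eq_down_sets by (rule is_distrib_lattice_incl_down_sets)
  have graded: "graded_of_rank (order_ideals m n) (card (Pmn m n))"
    unfolding order_ideals_eq_down_sets
  proof (rule graded_of_rank_down_sets[OF finite_Pmn])
    show "z \<in> Pmn m n" if "Ple m n z y" for y z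
      using that unfolding Ple_def by blast
    show "z = y \<or> potential z < potential y" if "Ple m n z y" for y z
      using that by (rule Ple_potential)
  qed
  have card_eq: "card (Pmn m n) = (\<Sum>k<a. (a - k) * (b - k))"
  proof (cases "m \<le> n")
    case True
    then show ?thesis
      using card_Pmn[OF assms(1,2)] by (simp add: a_def b_def)
  next
    case False
    then show ?thesis
      using card_Pmn[OF assms(1,2)] by (simp add: a_def b_def mult.commute)
  qed
  have "a \<le> b"
    unfolding a_def b_def by simp
  then have "6 * int (card (Pmn m n)) =
      - ((int a)^3) + 3 * (int a)^2 * int b + 3 * int a * int b + int a"
    unfolding card_eq by (rule sum_layer_sizes_closed_form)
  then show ?thesis
    using distrib graded by blast
qed

end
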